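(* Suppose that $(\tilde{u},\tilde{v})\in\mathbb{R}^2$ and $c>0$, and set \[ u_c = \frac{\tilde{u}}{c},\qquad v_c = \frac{2\ln c+\tilde{v}}{c}. \] Then as $c\to+\infty$ the catenoids $\mathfrak{C}_c$ (parametrized by $X_c$) satisfy \[ \lim_{c\to+\infty} X_c(u_c+iv_c) = \left(-\frac{1}{2\lambda_1}\cos\tilde{u}\,e^{\tilde{v}},\; -\frac{1}{2\lambda_2}\sin\tilde{u}\,e^{\tilde{v}},\; 0\right). \]
   Context: Setting: $\widetilde{E(2)}$ is $\mathbb{R}^3$ with the group law $(x_1,y_1,z_1)*(x_2,y_2,z_2)=(x_1+x_2\cos z_1-y_2\sin z_1,\ y_1+x_2\sin z_1+y_2\cos z_1,\ z_1+z_2)$ and the left-invariant metric $g(\lambda_1,\lambda_2)=\lambda_1^2(\cos z\,dx+\sin z\,dy)^2+\lambda_2^2(-\sin z\,dx+\cos z\,dy)^2+\frac{1}{\lambda_1^2\lambda_2^2}dz^2$, where either $\lambda_1>\lambda_2>0$ or $\lambda_1=\lambda_2=1$. Write coordinates as $(x_1,x_2,x_3)$. Construction of the catenoid $\mathfrak{C}_c$: For $c>0$ and a real $\theta$, put $\theta_c^+=\pi$ if $c>\sqrt2\lambda_1$ and $\theta_c^+=\arccos(1-c^2/\lambda_1^2)$ if $0<c\le\sqrt2\lambda_1$, and take $\theta\in(-\theta_c^+,\theta_c^+)$. Let $\varphi$ solve $\varphi'(u)=\sqrt{c^2+2\cos\theta\, B-D^2B^2}$, $\varphi(0)=0$, where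 $B=\lambda_1^2\cos^2\varphi(u)+\lambda_2^2\sin^2\varphi(u)$ and $D=\sin\theta/c$; let $f$ solve $f'(u)=DB$, $f(0)=0$; let $A=f(u)+cv$; let $G(u)=\int_0^u\frac{c-\varphi'(s)}{B}\,ds$; let $U>0$ be such that $\varphi(U)=\pi$, and let $H(c,\theta)=Df(U)+cG(U)$. It is known that for each $c>0$ there is a unique $\widetilde{\theta_c}\in(0,\pi/2)\cap(0,\theta_c^+)$ with $H(c,\widetilde{\theta_c})=0$, and that $\widetilde{\theta_c}\to\pi/2$ as $c\to+\infty$. The catenoid $\mathfrak{C}_c$ is the image of the conformal minimal immersion $X_c=(x_1,x_2,x_3):\mathbb{C}\to\widetilde{E(2)}$, $z=u+iv$, obtained with $\theta=\widetilde{\theta_c}$ (all of $\varphi,f,B,D,A,G,U$ then depend on $c$), given by $x_3(u+iv)=-\lambda_1\lambda_2Dv+\lambda_1\lambda_2G(u)$, $x_1=-\frac{1}{(c^2+\lambda_1^2\lambda_2^2D^2)B}\Big[\frac{1}{\lambda_1}f'\cos\varphi\,M_1-\frac{1}{\lambda_1}(c-\varphi')\sin\varphi\,M_2-\frac{1}{\lambda_2}(c-\varphi')\cos\varphi\,M_3-\frac{1}{\lambda_2}f'\sin\varphi\,M_4\Big]$, $x_2=-\frac{1}{(c^2+\lambda_1^2\lambda_2^2D^2)B}\Big[\frac{1}{\lambda_1}f'\cos\varphi\,M_4-\frac{1}{\lambda_1}(c-\varphi')\sin\varphi\,M_3+\frac{1}{\lambda_2}(c-\varphi')\cos\varphi\,M_2+\frac{1}{\lambda_2}f'\sin\varphi\,M_1\Big]$,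 where $M_1=c\cos x_3\cosh A-\lambda_1\lambda_2D\sin x_3\sinh A$, $M_2=c\cos x_3\sinh A-\lambda_1\lambda_2D\sin x_3\cosh A$, $M_3=c\sin x_3\sinh A+\lambda_1\lambda_2D\cos x_3\cosh A$, $M_4=c\sin x_3\cosh A+\lambda_1\lambda_2D\cos x_3\sinh A$, and $\varphi,\varphi',f'$ are evaluated at $u$. Its Gauss map is $g(u+iv)=e^{f(u)+cv}e^{i\varphi(u)}$. *)

theory Defs
  imports "HOL-Analysis.Analysis"
begin

text \<open>Setting: left-invariant metric g(lambda1,lambda2) on the universal cover of E(2).\<close>

definition admissible_lambdas :: "real \<Rightarrow> real \<Rightarrow> bool" where
  "admissible_lambdas l1 l2 \<longleftrightarrow> (l1 > l2 \<and> l2 > 0) \<or> (l1 = 1 \<and> l2 = 1)"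

definition theta_plus :: "real \<Rightarrow> real \<Rightarrow> real" where
  "theta_plus l1 c = (if c > sqrt 2 * l1 then pi else arccos (1 - c\<^sup>2 / l1\<^sup>2))"

definition Bfun :: "real \<Rightarrow> real \<Rightarrow> real \<Rightarrow> real" where
  "Bfun l1 l2 p = l1\<^sup>2 * (cos p)\<^sup>2 + l2\<^sup>2 * (sin p)\<^sup>2"

definition Dconst :: "real \<Rightarrow> real \<Rightarrow> real" where
  "Dconst c \<theta> = sin \<theta> / c"

definition sint :: "real \<Rightarrow> real \<Rightarrow> (real \<Rightarrow> real) \<Rightarrow> real" where
  "sint a b g = (if a \<le> b then integral {a..b} g else - integral {b..a} g)"

definition Gfun :: "real \<Rightarrow> real \<Rightarrow> real \<Rightarrow> (real \<Rightarrow> real) \<Rightarrow> real \<Rightarrow> real" where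
  "Gfun l1 l2 c \<phi> u = sint 0 u (\<lambda>s. (c - deriv \<phi> s) / Bfun l1 l2 (\<phi> s))"

definition Hfun :: "real \<Rightarrow> real \<Rightarrow> real \<Rightarrow> real \<Rightarrow> (real \<Rightarrow> real) \<Rightarrow> (real \<Rightarrow> real) \<Rightarrow> real \<Rightarrow> real" where
  "Hfun l1 l2 c \<theta> \<phi> f U = Dconst c \<theta> * f U + c * Gfun l1 l2 c \<phi> U"

definition catX :: "real \<Rightarrow> real \<Rightarrow> real \<Rightarrow> real \<Rightarrow> (real \<Rightarrow> real) \<Rightarrow> (real \<Rightarrow> real)
    \<Rightarrow> real \<Rightarrow> real \<Rightarrow> real \<times> real \<times> real" where
  "catX l1 l2 c \<theta> \<phi> f u v =
    (let D = Dconst c \<theta>; B = Bfun l1 l2 (\<phi> u); p = \<phi> u; dp = deriv \<phi> u; df = deriv f u;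
         A = f u + c * v;
         x3 = - l1 * l2 * D * v + l1 * l2 * Gfun l1 l2 c \<phi> u;
         M1 = c * cos x3 * cosh A - l1 * l2 * D * sin x3 * sinh A;
         M2 = c * cos x3 * sinh A - l1 * l2 * D * sin x3 * cosh A;
         M3 = c * sin x3 * sinh A + l1 * l2 * D * cos x3 * cosh A;
         M4 = c * sin x3 * cosh A + l1 * l2 * D * cos x3 * sinh A;
         K = - 1 / ((c\<^sup>2 + l1\<^sup>2 * l2\<^sup>2 * D\<^sup>2) * B);
         x1 = K * (1 / l1 * df * cos p * M1 - 1 / l1 * (c - dp) * sin p * M2
                   - 1 / l2 * (c - dp) * cos p * M3 - 1 / l2 * df * sin p * M4);
         x2 = K * (1 / l1 * df * cos p * M4 - 1 / l1 * (c - dp) * sin p * M3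
                   + 1 / l2 * (c - dp) * cos p * M2 + 1 / l2 * df * sin p * M1)
     in (x1, x2, x3))"

end

theory Submission
  imports Defs "HOL-Real_Asymp.Real_Asymp"
begin

(* Everything hinges on the closing condition H(c, theta_c) = 0. Since
   c - phi' = B (D^2 B - 2 cos theta) / (c + phi'), the integrand of G is negative and of size
   cos theta / c unless cos theta <= 2 D^2 l1^2, while D f(U) <= D^2 l1^2 U; so H = 0 forces
   cos theta_c = O(1/c^2), hence theta_c -> pi/2 and c D -> 1. On the scale u = ut/c this gives
   phi(u) -> ut, f(u) -> 0, G(u) -> 0, c f'(u) -> B(ut) and c (c - phi'(u)) -> 0, while
   A = f(u) + 2 ln c + vt makes cosh A / c^2 and sinh A / c^2 tend to exp vt / 2. After multiplying
   K by c^2 and dividing the M_i by c^3, X_c is a continuous function of these quantities, and its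
   value at their limits is the claimed point. Only c >= l1 matters, where the radicand of phi' is
   automatically nonnegative. *)

lemma DERIV_affine_deviation:
  fixes F F' :: "real \<Rightarrow> real"
  assumes "\<And>x. (F has_real_derivative F' x) (at x)" and "\<And>x. \<bar>F' x - a\<bar> \<le> M"
  shows "\<bar>F y - F x - a * (y - x)\<bar> \<le> M * \<bar>y - x\<bar>"
proof -
  have "norm ((F y - a * y) - (F x - a * x)) \<le> M * norm (y - x)"
    by (rule field_differentiable_bound[of UNIV])
       (auto intro!: derivative_eq_intros assms(1)[THEN DERIV_subset] assms(2))
  then show ?thesis by (simp add: algebra_simps)
qed

lemma sint_abs_le:
  assumes "continuous_on UNIV g" and "\<And>s. \<bar>g s\<bar> \<le> M"
  shows "\<bar>sint a b g\<bar> \<le> M * \<bar>b - a\<bar>"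
proof (cases "a \<le> b")
  case True
  have "norm (integral {a..b} g) \<le> M * (b - a)"
    using assms by (intro integral_bound True) (auto intro: continuous_on_subset)
  then show ?thesis using True by (simp add: sint_def)
next
  case False
  have "norm (integral {b..a} g) \<le> M * (a - b)"
    using assms False by (intro integral_bound) (auto intro: continuous_on_subset)
  then show ?thesis using False by (simp add: sint_def)
qed

lemma diff_sqrt_eq_divide:
  fixes c X :: real
  assumes "0 < c" and "0 \<le> X"
  shows "c - sqrt X = (c\<^sup>2 - X) / (c + sqrt X)"
proof -
  have "(c - sqrt X) * (c + sqrt X) = c\<^sup>2 - X"
    using assms by (simp add: algebra_simps power2_eq_square)
  moreover have "0 < c + sqrt X" using assms by (simp add: add_pos_nonneg)
  ultimately show ?thesis by (simp add: field_simps)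
qed

lemma cosh_plus_two_ln_over_sq:
  fixes c x :: real
  assumes "0 < c"
  shows "cosh (x + 2 * ln c) / c\<^sup>2 = (exp x + exp (- x) / c ^ 4) / 2"
    and "sinh (x + 2 * ln c) / c\<^sup>2 = (exp x - exp (- x) / c ^ 4) / 2"
proof -
  have "2 * ln c = ln (c\<^sup>2)"
    using assms by (simp add: ln_realpow)
  then have "exp (2 * ln c) = c\<^sup>2"
    using assms by simp
  then have plus: "exp (x + 2 * ln c) = exp x * c\<^sup>2"
    and minus: "exp (- (x + 2 * ln c)) = exp (- x) / c\<^sup>2"
    by (simp_all add: exp_add exp_diff)
  have c4: "c ^ 4 = c\<^sup>2 * c\<^sup>2" by algebra
  show "cosh (x + 2 * ln c) / c\<^sup>2 = (exp x + exp (- x) / c ^ 4) / 2"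
    unfolding cosh_def plus minus c4 using assms by (simp add: add_divide_distrib)
  show "sinh (x + 2 * ln c) / c\<^sup>2 = (exp x - exp (- x) / c ^ 4) / 2"
    unfolding sinh_def plus minus c4 using assms by (simp add: diff_divide_distrib)
qed

lemma tendsto_cosh_sinh_plus_two_ln_over_sq:
  fixes w :: "real \<Rightarrow> real"
  assumes "(w \<longlongrightarrow> w0) at_top"
  shows "((\<lambda>c. cosh (w c + 2 * ln c) / c\<^sup>2) \<longlongrightarrow> exp w0 / 2) at_top"
    and "((\<lambda>c. sinh (w c + 2 * ln c) / c\<^sup>2) \<longlongrightarrow> exp w0 / 2) at_top"
proof -
  have small: "((\<lambda>c. exp (- w c) / c ^ 4) \<longlongrightarrow> 0) at_top"
    by (rule tendsto_divide_0[OF tendsto_exp[OF tendsto_minus[OF assms]]])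
      (rule filterlim_at_top_imp_at_infinity, real_asymp)
  have "((\<lambda>c. cosh (w c + 2 * ln c) / c\<^sup>2) \<longlongrightarrow> (exp w0 + 0) / 2) at_top"
  proof (rule Lim_transform_eventually)
    show "((\<lambda>c. (exp (w c) + exp (- w c) / c ^ 4) / 2) \<longlongrightarrow> (exp w0 + 0) / 2) at_top"
      by (intro tendsto_intros assms small) simp
    show "\<forall>\<^sub>F c in at_top. (exp (w c) + exp (- w c) / c ^ 4) / 2 = cosh (w c + 2 * ln c) / c\<^sup>2"
      using eventually_gt_at_top[of 0] by eventually_elim (simp add: cosh_plus_two_ln_over_sq)
  qed
  then show "((\<lambda>c. cosh (w c + 2 * ln c) / c\<^sup>2) \<longlongrightarrow> exp w0 / 2) at_top"
    by simp
  have "((\<lambda>c. sinh (w c + 2 * ln c) / c\<^sup>2) \<longlongrightarrow> (exp w0 - 0) / 2) at_top"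
  proof (rule Lim_transform_eventually)
    show "((\<lambda>c. (exp (w c) - exp (- w c) / c ^ 4) / 2) \<longlongrightarrow> (exp w0 - 0) / 2) at_top"
      by (intro tendsto_intros assms small) simp
    show "\<forall>\<^sub>F c in at_top. (exp (w c) - exp (- w c) / c ^ 4) / 2 = sinh (w c + 2 * ln c) / c\<^sup>2"
      using eventually_gt_at_top[of 0] by eventually_elim (simp add: cosh_plus_two_ln_over_sq)
  qed
  then show "((\<lambda>c. sinh (w c + 2 * ln c) / c\<^sup>2) \<longlongrightarrow> exp w0 / 2) at_top"
    by simp
qed

lemma admissible_lambdasD:
  assumes "admissible_lambdas l1 l2"
  shows "0 < l2" and "l2 \<le> l1"
  using assms unfolding admissible_lambdas_def by auto

lemma Bfun_bounds:
  assumes "l2\<^sup>2 \<le> l1\<^sup>2"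
  shows "l2\<^sup>2 \<le> Bfun l1 l2 p" and "Bfun l1 l2 p \<le> l1\<^sup>2"
proof -
  have "Bfun l1 l2 p = l2\<^sup>2 + (l1\<^sup>2 - l2\<^sup>2) * (cos p)\<^sup>2"
    unfolding Bfun_def sin_squared_eq by (simp add: algebra_simps)
  then show "l2\<^sup>2 \<le> Bfun l1 l2 p"
    using assms by simp
  have "Bfun l1 l2 p = l1\<^sup>2 - (l1\<^sup>2 - l2\<^sup>2) * (sin p)\<^sup>2"
    unfolding Bfun_def cos_squared_eq by (simp add: algebra_simps)
  then show "Bfun l1 l2 p \<le> l1\<^sup>2"
    using assms by simp
qed

lemma Bfun_pos:
  assumes "admissible_lambdas l1 l2"
  shows "0 < Bfun l1 l2 p"
proof -
  have "0 < l2\<^sup>2" and "l2\<^sup>2 \<le> l1\<^sup>2"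
    using admissible_lambdasD[OF assms] by (simp_all add: power_mono)
  then show ?thesis
    using Bfun_bounds(1)[of l2 l1 p] by linarith
qed

lemma tendsto_Bfun:
  fixes p :: "'a::t2_space \<Rightarrow> real"
  assumes "(p \<longlongrightarrow> p0) F"
  shows "((\<lambda>x. Bfun l1 l2 (p x)) \<longlongrightarrow> Bfun l1 l2 p0) F"
  unfolding Bfun_def by (intro tendsto_intros assms)

(* catX with each ingredient normalised to have a finite limit as c -> oo: a = c f', b = c (c - phi'),
   delta = D / c, C = cosh A / c^2, S = sinh A / c^2; then m_i = M_i / c^3 and k = K c^2. *)
definition catX_rescaled ::
  "real \<Rightarrow> real \<Rightarrow> real \<Rightarrow> real \<Rightarrow> real \<Rightarrow> real \<Rightarrow> real \<Rightarrow> real \<Rightarrow> real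
    \<Rightarrow> real \<times> real \<times> real" where
  "catX_rescaled l1 l2 p a b \<delta> x3 C S =
    (let m1 = cos x3 * C - l1 * l2 * \<delta> * sin x3 * S;
         m2 = cos x3 * S - l1 * l2 * \<delta> * sin x3 * C;
         m3 = sin x3 * S + l1 * l2 * \<delta> * cos x3 * C;
         m4 = sin x3 * C + l1 * l2 * \<delta> * cos x3 * S;
         k = - 1 / ((1 + l1\<^sup>2 * l2\<^sup>2 * \<delta>\<^sup>2) * Bfun l1 l2 p)
     in (k * (1 / l1 * a * cos p * m1 - 1 / l1 * b * sin p * m2
              - 1 / l2 * b * cos p * m3 - 1 / l2 * a * sin p * m4),
         k * (1 / l1 * a * cos p * m4 - 1 / l1 * b * sin p * m3
              + 1 / l2 * b * cos p * m2 + 1 / l2 * a * sin p * m1),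
         x3))"

lemma catX_eq_rescaled:
  assumes "0 < c"
  shows "catX l1 l2 c \<theta> \<phi> f u v =
    catX_rescaled l1 l2 (\<phi> u) (c * deriv f u) (c * (c - deriv \<phi> u)) (Dconst c \<theta> / c)
      (- l1 * l2 * Dconst c \<theta> * v + l1 * l2 * Gfun l1 l2 c \<phi> u)
      (cosh (f u + c * v) / c\<^sup>2) (sinh (f u + c * v) / c\<^sup>2)"
proof -
  define D x3 A where "D = Dconst c \<theta>" and "x3 = - l1 * l2 * D * v + l1 * l2 * Gfun l1 l2 c \<phi> u"
    and "A = f u + c * v"
  define M1 M2 M3 M4 where
    "M1 = c * cos x3 * cosh A - l1 * l2 * D * sin x3 * sinh A"
    and "M2 = c * cos x3 * sinh A - l1 * l2 * D * sin x3 * cosh A"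
    and "M3 = c * sin x3 * sinh A + l1 * l2 * D * cos x3 * cosh A"
    and "M4 = c * sin x3 * cosh A + l1 * l2 * D * cos x3 * sinh A"
  define K where "K = - 1 / ((c\<^sup>2 + l1\<^sup>2 * l2\<^sup>2 * D\<^sup>2) * Bfun l1 l2 (\<phi> u))"
  define p a b where "p = \<phi> u" and "a = deriv f u" and "b = c - deriv \<phi> u"
  have catX: "catX l1 l2 c \<theta> \<phi> f u v =
      (K * (1 / l1 * a * cos p * M1 - 1 / l1 * b * sin p * M2 - 1 / l2 * b * cos p * M3 - 1 / l2 * a * sin p * M4),
       K * (1 / l1 * a * cos p * M4 - 1 / l1 * b * sin p * M3 + 1 / l2 * b * cos p * M2 + 1 / l2 * a * sin p * M1),
       x3)"
    unfolding catX_def Let_def M1_def M2_def M3_def M4_def K_def D_def x3_def A_def p_def a_def b_def ..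
  have "cos x3 * (cosh A / c\<^sup>2) - l1 * l2 * (D / c) * sin x3 * (sinh A / c\<^sup>2) = M1 / c ^ 3"
    "cos x3 * (sinh A / c\<^sup>2) - l1 * l2 * (D / c) * sin x3 * (cosh A / c\<^sup>2) = M2 / c ^ 3"
    "sin x3 * (sinh A / c\<^sup>2) + l1 * l2 * (D / c) * cos x3 * (cosh A / c\<^sup>2) = M3 / c ^ 3"
    "sin x3 * (cosh A / c\<^sup>2) + l1 * l2 * (D / c) * cos x3 * (sinh A / c\<^sup>2) = M4 / c ^ 3"
    "- 1 / ((1 + l1\<^sup>2 * l2\<^sup>2 * (D / c)\<^sup>2) * Bfun l1 l2 p) = K * c\<^sup>2"
    unfolding M1_def M2_def M3_def M4_def K_def p_def using assms
    by (simp_all add: field_simps power2_eq_square power3_eq_cube)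
  then have "catX_rescaled l1 l2 p (c * a) (c * b) (D / c) x3 (cosh A / c\<^sup>2) (sinh A / c\<^sup>2) =
      (K * c\<^sup>2 * (1 / l1 * (c * a) * cos p * (M1 / c ^ 3) - 1 / l1 * (c * b) * sin p * (M2 / c ^ 3)
           - 1 / l2 * (c * b) * cos p * (M3 / c ^ 3) - 1 / l2 * (c * a) * sin p * (M4 / c ^ 3)),
       K * c\<^sup>2 * (1 / l1 * (c * a) * cos p * (M4 / c ^ 3) - 1 / l1 * (c * b) * sin p * (M3 / c ^ 3)
           + 1 / l2 * (c * b) * cos p * (M2 / c ^ 3) + 1 / l2 * (c * a) * sin p * (M1 / c ^ 3)),
       x3)"
    unfolding catX_rescaled_def Let_def by simp
  also have "\<dots> = catX l1 l2 c \<theta> \<phi> f u v"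
    unfolding catX using assms by (simp add: field_simps power2_eq_square power3_eq_cube)
  finally show ?thesis
    unfolding p_def a_def b_def D_def x3_def A_def by simp
qed

lemma tendsto_catX_rescaled:
  fixes p :: "'a::t2_space \<Rightarrow> real"
  assumes "(p \<longlongrightarrow> p0) F" "(a \<longlongrightarrow> a0) F" "(b \<longlongrightarrow> b0) F" "(\<delta> \<longlongrightarrow> \<delta>0) F"
    "(x3 \<longlongrightarrow> s0) F" "(C \<longlongrightarrow> C0) F" "(S \<longlongrightarrow> S0) F"
    and "Bfun l1 l2 p0 \<noteq> 0"
  shows "((\<lambda>x. catX_rescaled l1 l2 (p x) (a x) (b x) (\<delta> x) (x3 x) (C x) (S x)) \<longlongrightarrow>
           catX_rescaled l1 l2 p0 a0 b0 \<delta>0 s0 C0 S0) F"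
proof -
  have "0 < 1 + l1\<^sup>2 * l2\<^sup>2 * \<delta>0\<^sup>2"
    by (simp add: add_pos_nonneg)
  then have "(1 + l1\<^sup>2 * l2\<^sup>2 * \<delta>0\<^sup>2) * Bfun l1 l2 p0 \<noteq> 0"
    using assms(8) by simp
  then show ?thesis
    unfolding catX_rescaled_def Let_def
    by (intro tendsto_intros assms(1-7) tendsto_Bfun) auto
qed

locale catenoid_profile =
  fixes l1 l2 c \<theta> :: real and \<phi> f :: "real \<Rightarrow> real"
  assumes admissible: "admissible_lambdas l1 l2"
    and large_c: "l1 \<le> c"
    and theta_pos: "0 < \<theta>" and theta_less: "\<theta> < pi / 2"
    and phi_deriv: "\<And>u. (\<phi> has_real_derivative
          sqrt (c\<^sup>2 + 2 * cos \<theta> * Bfun l1 l2 (\<phi> u) - (Dconst c \<theta>)\<^sup>2 * (Bfun l1 l2 (\<phi> u))\<^sup>2)) (at u)"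
    and phi_0: "\<phi> 0 = 0"
    and f_deriv: "\<And>u. (f has_real_derivative Dconst c \<theta> * Bfun l1 l2 (\<phi> u)) (at u)"
    and f_0: "f 0 = 0"
begin

abbreviation D :: real where "D \<equiv> Dconst c \<theta>"

abbreviation B :: "real \<Rightarrow> real" where "B s \<equiv> Bfun l1 l2 (\<phi> s)"

abbreviation speed_sq :: "real \<Rightarrow> real" where
  "speed_sq s \<equiv> c\<^sup>2 + 2 * cos \<theta> * B s - D\<^sup>2 * (B s)\<^sup>2"

lemma l2_pos: "0 < l2" and l2_le_l1: "l2 \<le> l1"
  using admissible by (rule admissible_lambdasD)+

lemma l1_pos: "0 < l1"
  using l2_pos l2_le_l1 by linarith

lemma c_pos: "0 < c"
  using l1_pos large_c by linarith

lemma B_ge: "l2\<^sup>2 \<le> Bfun l1 l2 p" and B_le: "Bfun l1 l2 p \<le> l1\<^sup>2"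
  using Bfun_bounds l2_pos l2_le_l1 by (simp_all add: power_mono)

lemma B_pos [simp]: "0 < Bfun l1 l2 p"
  using admissible by (rule Bfun_pos)

lemma B_nonneg [simp]: "0 \<le> Bfun l1 l2 p"
  using B_pos less_imp_le by blast

lemma cos_theta_pos [simp]: "0 < cos \<theta>"
  using theta_pos theta_less by (intro cos_gt_zero_pi) auto

lemma sin_theta_pos: "0 < sin \<theta>"
  using theta_pos theta_less by (intro sin_gt_zero) auto

lemma D_pos [simp]: "0 < D"
  using sin_theta_pos c_pos by (simp add: Dconst_def)

lemma D_nonneg [simp]: "0 \<le> D"
  using D_pos by linarith

lemma D_le: "D \<le> 1 / c"
  using c_pos by (simp add: Dconst_def divide_right_mono)

lemma D_l1_le: "D * l1 \<le> 1"
proof -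
  have "D * l1 \<le> (1 / c) * c"
    using D_le D_pos l1_pos large_c by (intro mult_mono) auto
  then show ?thesis using c_pos by simp
qed

lemma deriv_phi: "deriv \<phi> s = sqrt (speed_sq s)"
  using phi_deriv by (rule DERIV_imp_deriv)

lemma deriv_f: "deriv f s = D * B s"
  using f_deriv by (rule DERIV_imp_deriv)

lemma D_B_le: "D * B s \<le> c"
proof -
  have "D * B s \<le> (D * l1) * l1"
    using B_le[of "\<phi> s"] by (simp add: power2_eq_square)
  also have "\<dots> \<le> 1 * c"
    using D_l1_le l1_pos large_c by (intro mult_mono) auto
  finally show ?thesis by simp
qed

lemma speed_sq_nonneg: "0 \<le> speed_sq s"
proof -
  have "D\<^sup>2 * (B s)\<^sup>2 \<le> c\<^sup>2"
    using D_B_le by (simp add: power_mult_distrib[symmetric] power_mono less_imp_le)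
  moreover have "0 \<le> 2 * cos \<theta> * B s"
    by (simp add: less_imp_le)
  ultimately show ?thesis by linarith
qed

lemma speed_le: "sqrt (speed_sq s) \<le> 2 * c"
proof (rule real_le_lsqrt)
  have "2 * cos \<theta> * B s \<le> 2 * 1 * l1\<^sup>2"
    using B_le by (intro mult_mono) (simp_all add: less_imp_le)
  moreover have "l1\<^sup>2 \<le> c\<^sup>2"
    using l1_pos large_c by (simp add: power_mono)
  moreover have "0 \<le> D\<^sup>2 * (B s)\<^sup>2" and "0 \<le> c\<^sup>2" and "(2 * c)\<^sup>2 = 4 * c\<^sup>2"
    by simp_all
  ultimately show "speed_sq s \<le> (2 * c)\<^sup>2"
    by linarith
qed (use c_pos in simp)

lemma speed_denominator_pos: "0 < c + sqrt (speed_sq s)"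
  using add_pos_nonneg[OF c_pos real_sqrt_ge_zero[OF speed_sq_nonneg]] .

lemma c_minus_deriv_phi:
  "c - deriv \<phi> s = B s * ((D\<^sup>2 * B s - 2 * cos \<theta>) / (c + sqrt (speed_sq s)))"
proof -
  have "c\<^sup>2 - speed_sq s = B s * (D\<^sup>2 * B s - 2 * cos \<theta>)"
    by (simp add: algebra_simps power2_eq_square)
  then show ?thesis
    unfolding deriv_phi diff_sqrt_eq_divide[OF c_pos speed_sq_nonneg] by (simp only: times_divide_eq_right)
qed

lemma deriv_phi_deviation: "c * \<bar>c - deriv \<phi> s\<bar> \<le> l1\<^sup>2 * (D\<^sup>2 * l1\<^sup>2 + 2 * cos \<theta>)"
proof -
  let ?d = "c + sqrt (speed_sq s)"
  have le: "D\<^sup>2 * B s \<le> D\<^sup>2 * l1\<^sup>2"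
    using B_le by (rule mult_left_mono) simp
  have ge: "0 \<le> D\<^sup>2 * B s"
    by (rule mult_nonneg_nonneg) simp_all
  have num: "\<bar>D\<^sup>2 * B s - 2 * cos \<theta>\<bar> \<le> D\<^sup>2 * l1\<^sup>2 + 2 * cos \<theta>"
    using le ge cos_theta_pos unfolding abs_le_iff by linarith
  have "c * \<bar>c - deriv \<phi> s\<bar> = c / ?d * (B s * \<bar>D\<^sup>2 * B s - 2 * cos \<theta>\<bar>)"
    using speed_denominator_pos[of s] unfolding c_minus_deriv_phi abs_mult abs_divide
    by (simp add: abs_of_pos)
  also have "\<dots> \<le> 1 * (l1\<^sup>2 * (D\<^sup>2 * l1\<^sup>2 + 2 * cos \<theta>))"
  proof (rule mult_mono)
    show "c / ?d \<le> 1"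
      using speed_denominator_pos[of s] real_sqrt_ge_zero[OF speed_sq_nonneg[of s]]
      by (simp add: pos_divide_le_eq)
    show "B s * \<bar>D\<^sup>2 * B s - 2 * cos \<theta>\<bar> \<le> l1\<^sup>2 * (D\<^sup>2 * l1\<^sup>2 + 2 * cos \<theta>)"
      using B_le num by (rule mult_mono) simp_all
  qed simp_all
  finally show ?thesis by simp
qed

lemma deriv_phi_deviation_le: "\<bar>deriv \<phi> s - c\<bar> \<le> 3 * l1\<^sup>2 / c"
proof -
  have "(D * l1)\<^sup>2 \<le> 1"
    using D_l1_le l1_pos by (intro power_le_one mult_nonneg_nonneg) (simp_all add: less_imp_le)
  then have "D\<^sup>2 * l1\<^sup>2 + 2 * cos \<theta> \<le> 3"
    using cos_le_one[of \<theta>] unfolding power_mult_distrib by linarith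
  then have "l1\<^sup>2 * (D\<^sup>2 * l1\<^sup>2 + 2 * cos \<theta>) \<le> l1\<^sup>2 * 3"
    by (rule mult_left_mono) simp
  then have "c * \<bar>c - deriv \<phi> s\<bar> \<le> 3 * l1\<^sup>2"
    using deriv_phi_deviation[of s] by simp
  then show ?thesis
    using c_pos by (simp add: field_simps abs_minus_commute)
qed

lemma phi_deviation: "\<bar>\<phi> u - c * u\<bar> \<le> 3 * l1\<^sup>2 / c * \<bar>u\<bar>"
  using DERIV_affine_deviation[OF phi_deriv, of c "3 * l1\<^sup>2 / c" u 0]
    deriv_phi_deviation_le deriv_phi phi_0
  by simp

lemma f_abs_le: "\<bar>f u\<bar> \<le> D * l1\<^sup>2 * \<bar>u\<bar>"
proof -
  have "\<bar>D * B s - 0\<bar> \<le> D * l1\<^sup>2" for s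
    using B_le[of "\<phi> s"] by (simp add: abs_mult abs_of_pos mult_left_mono)
  from DERIV_affine_deviation[OF f_deriv this, of u 0] show ?thesis
    using f_0 by simp
qed

lemma G_integrand_continuous: "continuous_on UNIV (\<lambda>s. (c - deriv \<phi> s) / B s)"
proof -
  have "continuous_on UNIV \<phi>"
    using phi_deriv by (meson DERIV_isCont continuous_at_imp_continuous_on)
  then show ?thesis
    unfolding deriv_phi Bfun_def
    by (intro continuous_intros) (auto simp: B_pos[unfolded Bfun_def, THEN less_imp_neq, symmetric])
qed

lemma G_integrand_abs_le: "\<bar>(c - deriv \<phi> s) / B s\<bar> \<le> 3 * l1\<^sup>2 / (c * l2\<^sup>2)"
proof -
  have "\<bar>c - deriv \<phi> s\<bar> / B s \<le> (3 * l1\<^sup>2 / c) / l2\<^sup>2"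
    using deriv_phi_deviation_le[of s] B_ge[of "\<phi> s"] l2_pos
    by (intro frac_le) (auto simp: abs_minus_commute)
  then show ?thesis by (simp add: abs_div)
qed

lemma G_abs_le: "\<bar>Gfun l1 l2 c \<phi> u\<bar> \<le> 3 * l1\<^sup>2 / (c * l2\<^sup>2) * \<bar>u\<bar>"
  unfolding Gfun_def using G_integrand_continuous G_integrand_abs_le
  by (rule sint_abs_le[where b = u and a = 0, simplified])

lemma G_integrand_le_neg:
  assumes "D\<^sup>2 * l1\<^sup>2 < 2 * cos \<theta>"
  shows "(c - deriv \<phi> s) / B s \<le> (D\<^sup>2 * l1\<^sup>2 - 2 * cos \<theta>) / (3 * c)"
proof -
  let ?d = "c + sqrt (speed_sq s)"
  have "(c - deriv \<phi> s) / B s = (D\<^sup>2 * B s - 2 * cos \<theta>) / ?d"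
    unfolding c_minus_deriv_phi using B_pos[of "\<phi> s"] by (rule nonzero_mult_div_cancel_left[OF less_imp_neq[symmetric]])
  also have "\<dots> \<le> (D\<^sup>2 * l1\<^sup>2 - 2 * cos \<theta>) / ?d"
    using B_le[of "\<phi> s"] speed_denominator_pos[of s]
    by (intro divide_right_mono) (simp_all add: mult_left_mono)
  also have "\<dots> \<le> (D\<^sup>2 * l1\<^sup>2 - 2 * cos \<theta>) / (3 * c)"
    using assms speed_le[of s] c_pos speed_denominator_pos[of s]
    by (intro divide_left_mono_neg) simp_all
  finally show ?thesis .
qed

lemma c_G_le_neg:
  assumes "D\<^sup>2 * l1\<^sup>2 < 2 * cos \<theta>" and "0 \<le> u"
  shows "c * Gfun l1 l2 c \<phi> u \<le> u * (D\<^sup>2 * l1\<^sup>2 - 2 * cos \<theta>) / 3"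
proof -
  let ?N = "(D\<^sup>2 * l1\<^sup>2 - 2 * cos \<theta>) / (3 * c)"
  have "(\<lambda>s. (c - deriv \<phi> s) / B s) integrable_on {0..u}"
    by (rule integrable_continuous_interval continuous_on_subset[OF G_integrand_continuous])+ simp
  then have "integral {0..u} (\<lambda>s. (c - deriv \<phi> s) / B s) \<le> integral {0..u} (\<lambda>_. ?N)"
    using G_integrand_le_neg[OF assms(1)] by (intro integral_le) auto
  then have "Gfun l1 l2 c \<phi> u \<le> u * ?N"
    using assms(2) by (simp add: Gfun_def sint_def)
  then have "c * Gfun l1 l2 c \<phi> u \<le> c * (u * ?N)"
    by (rule mult_left_mono) (use c_pos in simp)
  also have "\<dots> = u * (D\<^sup>2 * l1\<^sup>2 - 2 * cos \<theta>) / 3"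
    using c_pos by simp
  finally show ?thesis .
qed

(* Otherwise the integrand of G stays below -(2 cos theta - D^2 l1^2) / (3 c), and c G(U) outweighs
   D f(U) <= D^2 l1^2 U in H(U) = 0. *)
lemma cos_theta_le:
  assumes "0 < U" and "Hfun l1 l2 c \<theta> \<phi> f U = 0"
  shows "cos \<theta> \<le> 2 * D\<^sup>2 * l1\<^sup>2"
proof (rule ccontr)
  assume big: "\<not> cos \<theta> \<le> 2 * D\<^sup>2 * l1\<^sup>2"
  moreover have "0 \<le> D\<^sup>2 * l1\<^sup>2" by simp
  ultimately have small: "D\<^sup>2 * l1\<^sup>2 < 2 * cos \<theta>"
    using cos_theta_pos by linarith
  have "f U \<le> D * l1\<^sup>2 * U"
    using f_abs_le[of U] assms(1) by (simp add: abs_le_iff abs_of_pos)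
  then have "D * f U \<le> D * (D * l1\<^sup>2 * U)"
    by (rule mult_left_mono) simp
  moreover have "c * Gfun l1 l2 c \<phi> U \<le> U * (D\<^sup>2 * l1\<^sup>2 - 2 * cos \<theta>) / 3"
    using c_G_le_neg[OF small] assms(1) by simp
  moreover have "D * f U + c * Gfun l1 l2 c \<phi> U = 0"
    using assms(2) by (simp add: Hfun_def)
  ultimately have "0 \<le> D * (D * l1\<^sup>2 * U) + U * (D\<^sup>2 * l1\<^sup>2 - 2 * cos \<theta>) / 3"
    by linarith
  also have "\<dots> = 2 / 3 * (U * (2 * D\<^sup>2 * l1\<^sup>2 - cos \<theta>))"
    by (simp add: field_simps power2_eq_square)
  also have "\<dots> < 0"
    using assms(1) big by (simp add: mult_pos_neg)
  finally show False by simp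
qed

end

locale catenoid_family =
  fixes l1 l2 :: real and \<theta> U :: "real \<Rightarrow> real" and \<phi> f :: "real \<Rightarrow> real \<Rightarrow> real"
  assumes profile: "\<And>c. l1 \<le> c \<Longrightarrow> catenoid_profile l1 l2 c (\<theta> c) (\<phi> c) (f c)"
    and closing: "\<And>c. l1 \<le> c \<Longrightarrow> 0 < U c \<and> Hfun l1 l2 c (\<theta> c) (\<phi> c) (f c) (U c) = 0"
begin

lemma cos_theta_tendsto: "((\<lambda>c. cos (\<theta> c)) \<longlongrightarrow> 0) at_top"
proof (rule Lim_null_comparison)
  show "((\<lambda>c. 2 * l1\<^sup>2 / c\<^sup>2) \<longlongrightarrow> 0) at_top"
    by real_asymp
  show "\<forall>\<^sub>F c in at_top. norm (cos (\<theta> c)) \<le> 2 * l1\<^sup>2 / c\<^sup>2"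
    using eventually_ge_at_top[of l1]
  proof eventually_elim
    case (elim c)
    interpret catenoid_profile l1 l2 c "\<theta> c" "\<phi> c" "f c"
      using profile[OF elim] .
    have "cos (\<theta> c) \<le> 2 * D\<^sup>2 * l1\<^sup>2"
      using closing[OF elim] by (intro cos_theta_le) auto
    also have "\<dots> \<le> 2 * (1 / c)\<^sup>2 * l1\<^sup>2"
      using D_le by (intro mult_left_mono mult_right_mono power_mono) simp_all
    finally show ?case
      using c_pos by (simp add: power_divide abs_of_pos)
  qed
qed

lemma sin_theta_tendsto: "((\<lambda>c. sin (\<theta> c)) \<longlongrightarrow> 1) at_top"
proof -
  have "((\<lambda>c. sqrt (1 - (cos (\<theta> c))\<^sup>2)) \<longlongrightarrow> sqrt (1 - 0\<^sup>2)) at_top"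
    by (intro tendsto_intros cos_theta_tendsto)
  moreover have "\<forall>\<^sub>F c in at_top. sqrt (1 - (cos (\<theta> c))\<^sup>2) = sin (\<theta> c)"
    using eventually_ge_at_top[of l1]
  proof eventually_elim
    case (elim c)
    interpret catenoid_profile l1 l2 c "\<theta> c" "\<phi> c" "f c"
      using profile[OF elim] .
    show ?case
      using sin_theta_pos by (simp add: sin_squared_eq[symmetric])
  qed
  ultimately show ?thesis
    by (simp add: Lim_transform_eventually)
qed

lemma Dconst_tendsto: "((\<lambda>c. Dconst c (\<theta> c)) \<longlongrightarrow> 0) at_top"
proof (rule Lim_null_comparison)
  show "((\<lambda>c::real. 1 / c) \<longlongrightarrow> 0) at_top"
    by real_asymp
  show "\<forall>\<^sub>F c in at_top. norm (Dconst c (\<theta> c)) \<le> 1 / c"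
    using eventually_ge_at_top[of l1]
  proof eventually_elim
    case (elim c)
    interpret catenoid_profile l1 l2 c "\<theta> c" "\<phi> c" "f c"
      using profile[OF elim] .
    show ?case
      using D_le by simp
  qed
qed

lemma phi_rescaled_tendsto: "((\<lambda>c. \<phi> c (ut / c)) \<longlongrightarrow> ut) at_top"
proof (rule LIM_zero_cancel, rule Lim_null_comparison)
  show "((\<lambda>c. 3 * l1\<^sup>2 * \<bar>ut\<bar> / c\<^sup>2) \<longlongrightarrow> 0) at_top"
    by real_asymp
  show "\<forall>\<^sub>F c in at_top. norm (\<phi> c (ut / c) - ut) \<le> 3 * l1\<^sup>2 * \<bar>ut\<bar> / c\<^sup>2"
    using eventually_ge_at_top[of l1]
  proof eventually_elim
    case (elim c)
    interpret catenoid_profile l1 l2 c "\<theta> c" "\<phi> c" "f c"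
      using profile[OF elim] .
    show ?case
      using phi_deviation[of "ut / c"] c_pos by (simp add: abs_divide power2_eq_square)
  qed
qed

lemma f_rescaled_tendsto: "((\<lambda>c. f c (ut / c)) \<longlongrightarrow> 0) at_top"
proof (rule Lim_null_comparison)
  show "((\<lambda>c. l1\<^sup>2 * \<bar>ut\<bar> / c\<^sup>2) \<longlongrightarrow> 0) at_top"
    by real_asymp
  show "\<forall>\<^sub>F c in at_top. norm (f c (ut / c)) \<le> l1\<^sup>2 * \<bar>ut\<bar> / c\<^sup>2"
    using eventually_ge_at_top[of l1]
  proof eventually_elim
    case (elim c)
    interpret catenoid_profile l1 l2 c "\<theta> c" "\<phi> c" "f c"
      using profile[OF elim] .
    have "\<bar>f c (ut / c)\<bar> \<le> D * l1\<^sup>2 * \<bar>ut / c\<bar>"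
      by (rule f_abs_le)
    also have "\<dots> \<le> 1 / c * l1\<^sup>2 * \<bar>ut / c\<bar>"
      using D_le by (intro mult_right_mono) simp_all
    finally show ?case
      using c_pos by (simp add: abs_divide power2_eq_square)
  qed
qed

lemma G_rescaled_tendsto: "((\<lambda>c. Gfun l1 l2 c (\<phi> c) (ut / c)) \<longlongrightarrow> 0) at_top"
proof (rule Lim_null_comparison)
  show "((\<lambda>c. 3 * l1\<^sup>2 * \<bar>ut\<bar> / l2\<^sup>2 / c\<^sup>2) \<longlongrightarrow> 0) at_top"
    by real_asymp
  show "\<forall>\<^sub>F c in at_top. norm (Gfun l1 l2 c (\<phi> c) (ut / c)) \<le> 3 * l1\<^sup>2 * \<bar>ut\<bar> / l2\<^sup>2 / c\<^sup>2"
    using eventually_ge_at_top[of l1]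
  proof eventually_elim
    case (elim c)
    interpret catenoid_profile l1 l2 c "\<theta> c" "\<phi> c" "f c"
      using profile[OF elim] .
    show ?case
      using G_abs_le[of "ut / c"] c_pos by (simp add: abs_divide power2_eq_square mult_ac)
  qed
qed

lemma deriv_f_rescaled_tendsto:
  "((\<lambda>c. c * deriv (f c) (ut / c)) \<longlongrightarrow> Bfun l1 l2 ut) at_top"
proof -
  have "((\<lambda>c. sin (\<theta> c) * Bfun l1 l2 (\<phi> c (ut / c))) \<longlongrightarrow> 1 * Bfun l1 l2 ut) at_top"
    by (intro tendsto_mult sin_theta_tendsto tendsto_Bfun phi_rescaled_tendsto)
  moreover have "\<forall>\<^sub>F c in at_top. sin (\<theta> c) * Bfun l1 l2 (\<phi> c (ut / c)) = c * deriv (f c) (ut / c)"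
    using eventually_ge_at_top[of l1]
  proof eventually_elim
    case (elim c)
    interpret catenoid_profile l1 l2 c "\<theta> c" "\<phi> c" "f c"
      using profile[OF elim] .
    show ?case
      using c_pos by (simp add: deriv_f Dconst_def)
  qed
  ultimately show ?thesis
    by (simp add: Lim_transform_eventually)
qed

lemma deriv_phi_rescaled_tendsto:
  "((\<lambda>c. c * (c - deriv (\<phi> c) (s c))) \<longlongrightarrow> 0) at_top"
proof (rule Lim_null_comparison)
  have "((\<lambda>c. l1\<^sup>2 * ((Dconst c (\<theta> c))\<^sup>2 * l1\<^sup>2 + 2 * cos (\<theta> c)))
      \<longlongrightarrow> l1\<^sup>2 * (0\<^sup>2 * l1\<^sup>2 + 2 * 0)) at_top"
    by (intro tendsto_intros Dconst_tendsto cos_theta_tendsto)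
  then show "((\<lambda>c. l1\<^sup>2 * ((Dconst c (\<theta> c))\<^sup>2 * l1\<^sup>2 + 2 * cos (\<theta> c))) \<longlongrightarrow> 0) at_top"
    by simp
  show "\<forall>\<^sub>F c in at_top. norm (c * (c - deriv (\<phi> c) (s c)))
      \<le> l1\<^sup>2 * ((Dconst c (\<theta> c))\<^sup>2 * l1\<^sup>2 + 2 * cos (\<theta> c))"
    using eventually_ge_at_top[of l1]
  proof eventually_elim
    case (elim c)
    interpret catenoid_profile l1 l2 c "\<theta> c" "\<phi> c" "f c"
      using profile[OF elim] .
    show ?case
      using deriv_phi_deviation[of "s c"] c_pos by (simp add: abs_mult)
  qed
qed

lemma third_coordinate_tendsto:
  "((\<lambda>c. - l1 * l2 * Dconst c (\<theta> c) * ((2 * ln c + vt) / c) + l1 * l2 * Gfun l1 l2 c (\<phi> c) (ut / c))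
     \<longlongrightarrow> 0) at_top"
proof -
  have "((\<lambda>c. sin (\<theta> c) * ((2 * ln c + vt) / c\<^sup>2)) \<longlongrightarrow> 1 * 0) at_top"
    by (intro tendsto_mult sin_theta_tendsto) real_asymp
  moreover have "\<forall>\<^sub>F c in at_top.
      sin (\<theta> c) * ((2 * ln c + vt) / c\<^sup>2) = Dconst c (\<theta> c) * ((2 * ln c + vt) / c)"
    using eventually_gt_at_top[of 0] by eventually_elim (simp add: Dconst_def power2_eq_square)
  ultimately have "((\<lambda>c. Dconst c (\<theta> c) * ((2 * ln c + vt) / c)) \<longlongrightarrow> 0) at_top"
    by (simp add: Lim_transform_eventually)
  then have "((\<lambda>c. - l1 * l2 * (Dconst c (\<theta> c) * ((2 * ln c + vt) / c)) + l1 * l2 * Gfun l1 l2 c (\<phi> c) (ut / c))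
      \<longlongrightarrow> - l1 * l2 * 0 + l1 * l2 * 0) at_top"
    by (intro tendsto_intros G_rescaled_tendsto)
  then show ?thesis
    by (simp add: mult.assoc)
qed

lemma catX_tendsto:
  "((\<lambda>c. catX l1 l2 c (\<theta> c) (\<phi> c) (f c) (ut / c) ((2 * ln c + vt) / c))
     \<longlongrightarrow> catX_rescaled l1 l2 ut (Bfun l1 l2 ut) 0 0 0 (exp vt / 2) (exp vt / 2)) at_top"
proof (rule Lim_transform_eventually)
  let ?x3 = "\<lambda>c. - l1 * l2 * Dconst c (\<theta> c) * ((2 * ln c + vt) / c) + l1 * l2 * Gfun l1 l2 c (\<phi> c) (ut / c)"
  let ?w = "\<lambda>c. f c (ut / c) + vt"
  let ?Y = "\<lambda>c. catX_rescaled l1 l2 (\<phi> c (ut / c)) (c * deriv (f c) (ut / c))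
    (c * (c - deriv (\<phi> c) (ut / c))) (Dconst c (\<theta> c) / c) (?x3 c)
    (cosh (?w c + 2 * ln c) / c\<^sup>2) (sinh (?w c + 2 * ln c) / c\<^sup>2)"
  have "(?w \<longlongrightarrow> 0 + vt) at_top"
    by (intro tendsto_add f_rescaled_tendsto tendsto_const)
  moreover have "filterlim (\<lambda>c::real. c) at_infinity at_top"
    by (rule filterlim_at_top_imp_at_infinity[OF filterlim_ident])
  moreover have "Bfun l1 l2 ut \<noteq> 0"
    using catenoid_profile.B_pos[OF profile[OF order_refl], of ut] by simp
  ultimately show "(?Y \<longlongrightarrow> catX_rescaled l1 l2 ut (Bfun l1 l2 ut) 0 0 0 (exp vt / 2) (exp vt / 2)) at_top"
    by (intro tendsto_catX_rescaled phi_rescaled_tendsto deriv_f_rescaled_tendsto deriv_phi_rescaled_tendsto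
        tendsto_divide_0[OF Dconst_tendsto] third_coordinate_tendsto tendsto_cosh_sinh_plus_two_ln_over_sq) auto
  show "\<forall>\<^sub>F c in at_top. ?Y c = catX l1 l2 c (\<theta> c) (\<phi> c) (f c) (ut / c) ((2 * ln c + vt) / c)"
    using eventually_gt_at_top[of 0] by eventually_elim (simp add: catX_eq_rescaled ac_simps)
qed

end

theorem proposition6p1:
  fixes l1 l2 ut vt :: real
    and \<theta> :: "real \<Rightarrow> real"          \<comment> \<open>c \<mapsto> theta~_c\<close>
    and \<phi> f :: "real \<Rightarrow> real \<Rightarrow> real"   \<comment> \<open>c \<mapsto> phi, f (for theta = theta~_c)\<close>
    and U :: "real \<Rightarrow> real"
  assumes lam: "admissible_lambdas l1 l2"
    and theta_range: "\<And>c. c > 0 \<Longrightarrow> 0 < \<theta> c \<and> \<theta> c < pi / 2 \<and> \<theta> c < theta_plus l1 c"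
    and phi_ode: "\<And>c u. c > 0 \<Longrightarrow>
        (\<phi> c has_real_derivative
           sqrt (c\<^sup>2 + 2 * cos (\<theta> c) * Bfun l1 l2 (\<phi> c u)
                 - (Dconst c (\<theta> c))\<^sup>2 * (Bfun l1 l2 (\<phi> c u))\<^sup>2)) (at u)"
    and phi0: "\<And>c. c > 0 \<Longrightarrow> \<phi> c 0 = 0"
    and f_ode: "\<And>c u. c > 0 \<Longrightarrow>
        (f c has_real_derivative Dconst c (\<theta> c) * Bfun l1 l2 (\<phi> c u)) (at u)"
    and f0: "\<And>c. c > 0 \<Longrightarrow> f c 0 = 0"
    and U_pos: "\<And>c. c > 0 \<Longrightarrow> U c > 0 \<and> \<phi> c (U c) = pi"
    and H_zero: "\<And>c. c > 0 \<Longrightarrow> Hfun l1 l2 c (\<theta> c) (\<phi> c) (f c) (U c) = 0"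
  shows "((\<lambda>c. catX l1 l2 c (\<theta> c) (\<phi> c) (f c) (ut / c) ((2 * ln c + vt) / c))
           \<longlongrightarrow> (- 1 / (2 * l1) * cos ut * exp vt, - 1 / (2 * l2) * sin ut * exp vt, 0)) at_top"
proof -
  have l2: "0 < l2" and l1: "0 < l1"
    using admissible_lambdasD[OF lam] by linarith+
  interpret catenoid_family l1 l2 \<theta> U \<phi> f
  proof (rule catenoid_family.intro)
    fix c assume "l1 \<le> c"
    with l1 have c: "0 < c" by linarith
    then show "catenoid_profile l1 l2 c (\<theta> c) (\<phi> c) (f c)"
      unfolding catenoid_profile_def
      using lam \<open>l1 \<le> c\<close> theta_range phi_ode phi0 f_ode f0 by blast
    show "0 < U c \<and> Hfun l1 l2 c (\<theta> c) (\<phi> c) (f c) (U c) = 0"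
      using U_pos[OF c] H_zero[OF c] by blast
  qed
  have limit: "catX_rescaled l1 l2 ut (Bfun l1 l2 ut) 0 0 0 (exp vt / 2) (exp vt / 2)
      = (- 1 / (2 * l1) * cos ut * exp vt, - 1 / (2 * l2) * sin ut * exp vt, 0)"
    using Bfun_pos[OF lam, of ut] l1 l2 unfolding catX_rescaled_def Let_def by simp
  show ?thesis
    using catX_tendsto[of ut vt] unfolding limit .
qed

end
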